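(* For every $n$, let $\mathbf C_n$ be a point process in $\mathcal C(G'')$ (a random discrete multiset in $\mathcal C(G'')$) consisting only of pointed perturbed diamonds with parameter $n$. Assume that for every $T<\infty$, $\lim_n \mathbb P(\mathbf C_n\cap A_{n,T}\ne\emptyset)=0$. Then every subsequential weak limit of $(\mathbf C_n)_n$ (as point processes in $\mathcal C(G'')$) almost surely consists only of perturbed pointed horoballs of type II (possibly with infinite delay).
   Context: $G,G'$ are finitely generated groups with neutral elements $o,o'$, word metrics $d,d'$ from Cayley graphs with respect to finite generating sets, ball volumes $v_n,v'_n$, growth rates $a=\lim v_n^{1/n}>1$, $a'=\lim (v'_n)^{1/n}>1$, and $c:=\log a/\log a'$. $G''=G\times G'$ has origin $o''=(o,o')$ and metric $\rho_c((x,x'),(y,y'))=d(x,y)+d'(x',y')/c$. Fix a non-decreasing $f:\mathbb Z_{\ge0}\to\mathbb Z_{\ge0}$ and a strictly increasing sequence $(r_j)$ in $\mathbb Z_{\ge0}$ with $f(0)=0$, $r'_j:=f(r_j)$, $0<\inf_n v'_{r'_n}/v_{r_n}\le \sup_n v'_{r'_n}/v_{r_n}<\infty$ and $\forall m\,\exists N\,\forall n\ge N:|f(n+m)-f(n)-cm|\le1$. Perturbed diamond: $D_n(x''):=\bigcup_{t=0}^{r_n}\{(y,y'):d(x,y)=r_n-t,\ d'(x',y')\le f(t)\}$ for $x''=(x,x')$; a pointed perturbed diamond is $(D_n(x''),x'')$. Horocompactification $\overline{G''}$ of $(G'',\rho_c)$: with $\rho_{x''}(y'')=\rho_c(x'',y'')-\rho_c(x'',o'')$,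 the closure of $\{\rho_{x''}\}$ among $1$-Lipschitz functions vanishing at $o''$ under pointwise convergence; similarly $\overline G,\overline{G'}$, and $\partial G=\overline G\setminus G$, $\partial G'$. For $\theta\in\partial G$, $\theta'\in\partial G'$, $(\theta,\theta')\in\partial G''$ is the function $(y,y')\mapsto d_\theta(y)+d_{\theta'}(y')/c$. $\mathcal C(G'')$ is the Polish space of pairs $(B,\theta)$ with $B\subseteq G''$ nonempty and $\theta\in\overline{G''}$, with the product of the Fell topology (pointwise convergence of indicators) and the topology of $\overline{G''}$; a discrete set in $\mathcal C(G'')$ is a multiset such that each $y''\in G''$ lies in $B$ for only finitely many elements $(B,\theta)$; point processes are random discrete sets, with weak convergence of their laws with respect to vague convergence of counting measures. $A_{n,T}$ is the set of pointed perturbed diamonds with parameter $n$ whose center $(x,x')$ satisfies either ($d(o,x)<r_n+T$ and $d'(o',x')<T$) or ($d'(o',x')<r'_n+T$ and $d(o,x)<T$). A perturbed pointed horoball of type II is a pointed set $(B,\theta'')$ which is a limit in $\mathcal C(G'')$ of pointed perturbed diamonds $(D_{n_k}(x''_k),x''_k)$ (parameters $n_k\to\infty$) with centers $x''_k=(x_k,x'_k)$ satisfying $d(x_k,o)\to\infty$ and $d'(x'_k,o')\to\infty$; additionally $(G'',\theta'')$ for any $\theta''\in\partial G\times\partial G'$ counts as one with infinite delay. *)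

theory Defs
  imports "HOL-Analysis.Analysis" "HOL-Probability.Probability"
begin

text \<open>Groups are modelled as types of class group_add (not necessarily commutative);
  the neutral element is 0. A finite generating set S; the Cayley graph has edges x -- x+s,
  s in S, so d(x,y) is the word length of -x+y over S and its inverses.\<close>

definition fin_generating :: "'a::group_add set \<Rightarrow> bool" where
  "fin_generating S \<longleftrightarrow> finite S \<and>
     (\<forall>g. \<exists>ws. set ws \<subseteq> S \<union> uminus ` S \<and> sum_list ws = g)"

definition word_len :: "'a::group_add set \<Rightarrow> 'a \<Rightarrow> nat" where
  "word_len S g = (LEAST n. \<exists>ws. length ws = n \<and> set ws \<subseteq> S \<union> uminus ` S \<and> sum_list ws = g)"

definition word_dist :: "'a::group_add set \<Rightarrow> 'a \<Rightarrow> 'a \<Rightarrow> nat" where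
  "word_dist S x y = word_len S (- x + y)"

definition ball_vol :: "'a::group_add set \<Rightarrow> nat \<Rightarrow> nat" where
  "ball_vol S n = card {x. word_dist S 0 x \<le> n}"

definition growth_rate :: "'a::group_add set \<Rightarrow> real" where
  "growth_rate S = lim (\<lambda>n. root n (real (ball_vol S n)))"

definition cexp :: "'a::group_add set \<Rightarrow> 'b::group_add set \<Rightarrow> real" where
  "cexp S S' = ln (growth_rate S) / ln (growth_rate S')"

definition rho :: "'a::group_add set \<Rightarrow> 'b::group_add set \<Rightarrow> ('a \<times> 'b) \<Rightarrow> ('a \<times> 'b) \<Rightarrow> real" where
  "rho S S' p q = real (word_dist S (fst p) (fst q)) + real (word_dist S' (snd p) (snd q)) / cexp S S'"

definition horo_fun :: "('p \<Rightarrow> 'p \<Rightarrow> real) \<Rightarrow> 'p \<Rightarrow> 'p \<Rightarrow> ('p \<Rightarrow> real)" where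
  "horo_fun \<delta> base x = (\<lambda>y. \<delta> x y - \<delta> x base)"

text \<open>Closure in the topology of pointwise convergence (product topology on functions).\<close>
definition horo_closure :: "('p \<Rightarrow> 'p \<Rightarrow> real) \<Rightarrow> 'p \<Rightarrow> ('p \<Rightarrow> real) set" where
  "horo_closure \<delta> base = closure (range (horo_fun \<delta> base))"

definition horo_boundary :: "('p \<Rightarrow> 'p \<Rightarrow> real) \<Rightarrow> 'p \<Rightarrow> ('p \<Rightarrow> real) set" where
  "horo_boundary \<delta> base = horo_closure \<delta> base - range (horo_fun \<delta> base)"

abbreviation bdry :: "'a::group_add set \<Rightarrow> ('a \<Rightarrow> real) set" where
  "bdry S \<equiv> horo_boundary (\<lambda>x y. real (word_dist S x y)) 0"

text \<open>A pointed set is a pair (B, theta): B is a subset of G'' given by its indicator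
  (a predicate), theta an element of the horocompactification of (G'', rho_c).
  The ambient space carries the product topology, i.e. pointwise convergence of
  indicators (Fell topology) times pointwise convergence of functions.\<close>

type_synonym ('a, 'b) pset = "(('a \<times> 'b) \<Rightarrow> bool) \<times> (('a \<times> 'b) \<Rightarrow> real)"

definition Cspace :: "'a::group_add set \<Rightarrow> 'b::group_add set \<Rightarrow> ('a, 'b) pset set" where
  "Cspace S S' = {\<xi>. (\<exists>y. fst \<xi> y) \<and> snd \<xi> \<in> horo_closure (rho S S') (0, 0)}"

definition Ctop :: "'a::group_add set \<Rightarrow> 'b::group_add set \<Rightarrow> ('a, 'b) pset topology" where
  "Ctop S S' = subtopology euclidean (Cspace S S')"

definition diamond :: "'a::group_add set \<Rightarrow> 'b::group_add set \<Rightarrow> (nat \<Rightarrow> nat) \<Rightarrow> (nat \<Rightarrow> nat)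
    \<Rightarrow> nat \<Rightarrow> ('a \<times> 'b) \<Rightarrow> ('a \<times> 'b) \<Rightarrow> bool" where
  "diamond S S' f r n x = (\<lambda>y. \<exists>t\<le>r n. word_dist S (fst x) (fst y) = r n - t \<and>
                                     word_dist S' (snd x) (snd y) \<le> f t)"

text \<open>Pointed perturbed diamond (D_n(x''), x''), the point x'' being viewed in the
  horocompactification via its horofunction.\<close>
definition pdiam :: "'a::group_add set \<Rightarrow> 'b::group_add set \<Rightarrow> (nat \<Rightarrow> nat) \<Rightarrow> (nat \<Rightarrow> nat)
    \<Rightarrow> nat \<Rightarrow> ('a \<times> 'b) \<Rightarrow> ('a, 'b) pset" where
  "pdiam S S' f r n x = (diamond S S' f r n x, horo_fun (rho S S') (0, 0) x)"

definition A_set :: "'a::group_add set \<Rightarrow> 'b::group_add set \<Rightarrow> (nat \<Rightarrow> nat) \<Rightarrow> (nat \<Rightarrow> nat)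
    \<Rightarrow> nat \<Rightarrow> real \<Rightarrow> ('a, 'b) pset set" where
  "A_set S S' f r n T = {pdiam S S' f r n x | x.
      (real (word_dist S 0 (fst x)) < real (r n) + T \<and> real (word_dist S' 0 (snd x)) < T) \<or>
      (real (word_dist S' 0 (snd x)) < real (f (r n)) + T \<and> real (word_dist S 0 (fst x)) < T)}"

definition horoball_II :: "'a::group_add set \<Rightarrow> 'b::group_add set \<Rightarrow> (nat \<Rightarrow> nat) \<Rightarrow> (nat \<Rightarrow> nat)
    \<Rightarrow> ('a, 'b) pset \<Rightarrow> bool" where
  "horoball_II S S' f r \<xi> \<longleftrightarrow>
     (\<xi> \<in> Cspace S S' \<and>
      (\<exists>nk :: nat \<Rightarrow> nat. \<exists>xk :: nat \<Rightarrow> 'a \<times> 'b.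
          filterlim nk at_top sequentially \<and>
          filterlim (\<lambda>k. word_dist S (fst (xk k)) 0) at_top sequentially \<and>
          filterlim (\<lambda>k. word_dist S' (snd (xk k)) 0) at_top sequentially \<and>
          ((\<lambda>k. pdiam S S' f r (nk k) (xk k)) \<longlonglongrightarrow> \<xi>)))
   \<or> (\<exists>\<theta> \<theta>'. \<theta> \<in> bdry S \<and> \<theta>' \<in> bdry S' \<and>
          \<xi> = ((\<lambda>_. True), (\<lambda>y. \<theta> (fst y) + \<theta>' (snd y) / cexp S S')))"

text \<open>A discrete multiset in C(G'') is given by its multiplicity function mu,
  supported in C(G''), such that each y lies in B for only finitely many elements.\<close>
definition disc_sets :: "'a::group_add set \<Rightarrow> 'b::group_add set \<Rightarrow> (('a, 'b) pset \<Rightarrow> nat) set" where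
  "disc_sets S S' = {\<mu>. (\<forall>\<xi>. \<mu> \<xi> \<noteq> 0 \<longrightarrow> \<xi> \<in> Cspace S S') \<and>
                       (\<forall>y. finite {\<xi>. \<mu> \<xi> \<noteq> 0 \<and> fst \<xi> y})}"

definition Cc_funs :: "'a::group_add set \<Rightarrow> 'b::group_add set \<Rightarrow> (('a, 'b) pset \<Rightarrow> real) set" where
  "Cc_funs S S' = {g. continuous_map (Ctop S S') euclideanreal g \<and>
      (\<exists>K. compactin (Ctop S S') K \<and> (\<forall>\<xi>\<in>Cspace S S' - K. g \<xi> = 0))}"

definition cm_integral :: "('c \<Rightarrow> real) \<Rightarrow> ('c \<Rightarrow> nat) \<Rightarrow> real" where
  "cm_integral g \<mu> = (\<Sum>\<xi>\<in>{\<xi>. \<mu> \<xi> \<noteq> 0 \<and> g \<xi> \<noteq> 0}. real (\<mu> \<xi>) * g \<xi>)"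

definition vague_top :: "'a::group_add set \<Rightarrow> 'b::group_add set \<Rightarrow> (('a, 'b) pset \<Rightarrow> nat) topology" where
  "vague_top S S' = subtopology
     (topology_generated_by {{\<mu>. cm_integral g \<mu> \<in> U} | g U. g \<in> Cc_funs S S' \<and> open U})
     (disc_sets S S')"

definition borel_of :: "'c topology \<Rightarrow> 'c measure" where
  "borel_of X = sigma (topspace X) {U. openin X U}"

definition weak_conv_top :: "'c topology \<Rightarrow> (nat \<Rightarrow> 'c measure) \<Rightarrow> 'c measure \<Rightarrow> bool" where
  "weak_conv_top X P Q \<longleftrightarrow>
     (\<forall>F. continuous_map X euclideanreal F \<and> bounded (F ` topspace X) \<longrightarrow>
          (\<lambda>k. integral\<^sup>L (P k) F) \<longlonglongrightarrow> integral\<^sup>L Q F)"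

end

theory Submission
  imports Defs
begin

text \<open>Cylinder bumps -- continuous, compactly supported functions on C(G'') that test
  membership of finitely many points and the horofunction at those points up to a rational
  tolerance -- form a countable family whose positivity sets are neighbourhood bases. If
  \<xi> is not a perturbed pointed horoball of type II, a diagonal argument yields such a
  bump g, positive at \<xi>, which for large n is positive at a pointed diamond only when
  one coordinate of its centre is bounded, i.e. only on A_set n T. Hence the integral of
  min 1 (cm_integral g \<mu>) under the n-th law is at most the probability that C_n meets
  A_set n T, which tends to 0; weak convergence makes cm_integral g \<mu> vanish almost surely
  in the limit, so \<xi> is almost surely not an atom. Countably many bumps cover all such \<xi>.\<close>

section \<open>Word metrics\<close>

lemma word_len_witness:
  assumes "fin_generating S"
  obtains ws where "length ws = word_len S g" "set ws \<subseteq> S \<union> uminus ` S" "sum_list ws = g"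
proof -
  from assms obtain ws where "set ws \<subseteq> S \<union> uminus ` S \<and> sum_list ws = g"
    unfolding fin_generating_def by blast
  then have "\<exists>n ws. length ws = n \<and> set ws \<subseteq> S \<union> uminus ` S \<and> sum_list ws = g" by blast
  then have "\<exists>ws. length ws = word_len S g \<and> set ws \<subseteq> S \<union> uminus ` S \<and> sum_list ws = g"
    unfolding word_len_def by (rule LeastI_ex)
  then show thesis using that by blast
qed

lemma word_len_le:
  assumes "set ws \<subseteq> S \<union> uminus ` S" "sum_list ws = g"
  shows "word_len S g \<le> length ws"
  unfolding word_len_def using assms by (intro Least_le) blast

lemma word_len_add_le:
  assumes "fin_generating S"
  shows "word_len S (a + b) \<le> word_len S a + word_len S b"
proof -
  obtain u where u: "length u = word_len S a" "set u \<subseteq> S \<union> uminus ` S" "sum_list u = a"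
    using word_len_witness[OF assms] .
  obtain v where v: "length v = word_len S b" "set v \<subseteq> S \<union> uminus ` S" "sum_list v = b"
    using word_len_witness[OF assms] .
  have "word_len S (a + b) \<le> length (u @ v)"
    by (rule word_len_le) (use u v in auto)
  then show ?thesis using u v by simp
qed

lemma sum_list_map_uminus_rev:
  fixes ws :: "'a::group_add list"
  shows "sum_list (map uminus (rev ws)) = - sum_list ws"
  by (induction ws) (auto simp: minus_add)

lemma word_len_uminus_le:
  assumes "fin_generating S"
  shows "word_len S (- a) \<le> word_len S a"
proof -
  obtain u where u: "length u = word_len S a" "set u \<subseteq> S \<union> uminus ` S" "sum_list u = a"
    using word_len_witness[OF assms] .
  have "word_len S (- a) \<le> length (map uminus (rev u))"
    by (rule word_len_le) (use u in \<open>auto simp: sum_list_map_uminus_rev\<close>)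
  then show ?thesis using u by simp
qed

lemma word_len_uminus:
  assumes "fin_generating S"
  shows "word_len S (- a) = word_len S a"
  using word_len_uminus_le[OF assms, of a] word_len_uminus_le[OF assms, of "- a"] by simp

lemma word_dist_self: "word_dist S x x = 0"
  using word_len_le[of "[]" S 0] unfolding word_dist_def by simp

lemma word_dist_triangle:
  assumes "fin_generating S"
  shows "word_dist S x z \<le> word_dist S x y + word_dist S y z"
proof -
  have "- x + z = (- x + y) + (- y + z)" by (simp add: add.assoc)
  then show ?thesis
    unfolding word_dist_def using word_len_add_le[OF assms, of "- x + y" "- y + z"] by simp
qed

lemma word_dist_commute:
  assumes "fin_generating S"
  shows "word_dist S x y = word_dist S y x"
proof -
  have "- (- x + y) = - y + x" by (simp add: minus_add)
  then show ?thesis unfolding word_dist_def using word_len_uminus[OF assms, of "- x + y"] by simp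
qed

lemma word_dist_diff_le:
  assumes "fin_generating S"
  shows "\<bar>real (word_dist S x z) - real (word_dist S x y)\<bar> \<le> real (word_dist S y z)"
  using word_dist_triangle[OF assms, of x z y] word_dist_triangle[OF assms, of x y z]
    word_dist_commute[OF assms, of z y] by linarith

lemma countable_UNIV_fin_generating:
  fixes S :: "'a::group_add set"
  assumes "fin_generating S"
  shows "countable (UNIV :: 'a set)"
proof -
  have "(UNIV :: 'a set) = sum_list ` lists (S \<union> uminus ` S)"
    using assms unfolding fin_generating_def by (auto simp: image_iff lists_eq_set) (metis eq_commute)
  moreover have "countable (lists (S \<union> uminus ` S))"
    using assms unfolding fin_generating_def by (intro countable_lists countable_finite) auto
  ultimately show ?thesis by (metis countable_image)
qed

lemma countable_UNIV_prod_fin_generating: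
  fixes S :: "'a::group_add set" and S' :: "'b::group_add set"
  assumes "fin_generating S" "fin_generating S'"
  shows "countable (UNIV :: ('a \<times> 'b) set)"
proof -
  have "countable (UNIV \<times> UNIV :: ('a \<times> 'b) set)"
    using assms by (intro countable_SIGMA countable_UNIV_fin_generating)
  then show ?thesis by simp
qed

lemma surj_from_nat_into_UNIV:
  fixes S :: "'a::group_add set" and S' :: "'b::group_add set"
  assumes "fin_generating S" "fin_generating S'"
  shows "surj (from_nat_into (UNIV :: ('a \<times> 'b) set))"
  using countable_UNIV_prod_fin_generating[OF assms] by (simp add: range_from_nat_into)

section \<open>Compactness of the horofunction closure\<close>

lemma compact_fun_box:
  assumes "\<And>z. compact (K z)"
  shows "compact {\<theta>::'p \<Rightarrow> 'b::topological_space. \<forall>z. \<theta> z \<in> K z}"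
proof -
  have "compactin (product_topology (\<lambda>_. euclidean) UNIV) (PiE UNIV K)"
    using assms by (simp add: compactin_PiE)
  moreover have "PiE UNIV K = {\<theta>. \<forall>z. \<theta> z \<in> K z}"
    by (auto simp: PiE_UNIV_domain Pi_iff)
  ultimately show ?thesis by (simp add: euclidean_product_topology)
qed

lemma compact_pred_true_at: "compact {B::'p \<Rightarrow> bool. B y}"
proof -
  have "{B. B y} = {B. \<forall>z. B z \<in> (if z = y then {True} else UNIV)}"
    by auto
  then show ?thesis by (simp only:) (rule compact_fun_box; simp add: finite_imp_compact)
qed

lemma closed_fun_box:
  assumes "\<And>z. closed (K z)"
  shows "closed {\<theta>::'p \<Rightarrow> 'b::topological_space. \<forall>z. \<theta> z \<in> K z}"
proof -
  have "{\<theta>. \<forall>z. \<theta> z \<in> K z} = (\<Inter>z. (\<lambda>\<theta>. \<theta> z) -` K z)" by auto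
  moreover have "closed ((\<lambda>\<theta>::'p \<Rightarrow> 'b. \<theta> z) -` K z)" for z
    using assms by (intro closed_vimage) auto
  ultimately show ?thesis by auto
qed

lemma tendsto_fun_pointwise:
  fixes f :: "'i \<Rightarrow> 'p \<Rightarrow> 'b::topological_space"
  assumes "\<And>y. ((\<lambda>c. f c y) \<longlongrightarrow> l y) F"
  shows "(f \<longlongrightarrow> l) F"
proof -
  have "limitin (product_topology (\<lambda>_. euclidean) UNIV) f l F"
    unfolding limitin_componentwise using assms by simp
  then show ?thesis by (simp add: euclidean_product_topology)
qed

lemma compact_horo_closure:
  assumes "\<And>x z. \<bar>horo_fun \<delta> base x z\<bar> \<le> R z"
  shows "compact (horo_closure \<delta> base)"
proof -
  let ?B = "{\<theta>. \<forall>z. \<theta> z \<in> {- R z..R z}}"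
  have "horo_fun \<delta> base x z \<in> {- R z..R z}" for x z
    using assms[of x z] by auto
  then have "range (horo_fun \<delta> base) \<subseteq> ?B" by auto
  then have "horo_closure \<delta> base \<subseteq> ?B"
    unfolding horo_closure_def by (intro closure_minimal closed_fun_box) auto
  moreover have "compact (horo_closure \<delta> base \<inter> ?B)"
    unfolding horo_closure_def by (intro closed_Int_compact compact_fun_box) auto
  ultimately show ?thesis by (simp add: Int_absorb2)
qed

lemma horo_fun_rho_abs_le:
  assumes "fin_generating S" "fin_generating S'"
  shows "\<bar>horo_fun (rho S S') (0, 0) x z\<bar>
    \<le> real (word_dist S 0 (fst z)) + real (word_dist S' 0 (snd z)) / \<bar>cexp S S'\<bar>"
proof -
  let ?u = "real (word_dist S (fst x) (fst z)) - real (word_dist S (fst x) 0)"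
  let ?v = "real (word_dist S' (snd x) (snd z)) - real (word_dist S' (snd x) 0)"
  have "horo_fun (rho S S') (0, 0) x z = ?u + ?v / cexp S S'"
    unfolding horo_fun_def rho_def by (simp add: diff_divide_distrib)
  moreover have "\<bar>?u\<bar> \<le> real (word_dist S 0 (fst z))"
    using word_dist_diff_le[OF assms(1)] .
  moreover have "\<bar>?v / cexp S S'\<bar> \<le> real (word_dist S' 0 (snd z)) / \<bar>cexp S S'\<bar>"
    using word_dist_diff_le[OF assms(2)] by (simp add: abs_divide divide_right_mono)
  ultimately show ?thesis by linarith
qed

lemma compact_horo_closure_rho:
  assumes "fin_generating S" "fin_generating S'"
  shows "compact (horo_closure (rho S S') (0, 0))"
  using horo_fun_rho_abs_le[OF assms] by (rule compact_horo_closure)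

lemma pdiam_in_Cspace: "pdiam S S' f r n x \<in> Cspace S S'"
proof -
  have "\<exists>y. diamond S S' f r n x y"
    unfolding diamond_def by (intro exI[of _ x] exI[of _ "r n"]) (simp add: word_dist_self)
  moreover have "horo_fun (rho S S') (0, 0) x \<in> horo_closure (rho S S') (0, 0)"
    unfolding horo_closure_def by (rule closure_subset[THEN subsetD]) auto
  ultimately show ?thesis unfolding Cspace_def pdiam_def by auto
qed

lemma Cspace_anchor:
  assumes "surj E" "\<xi> \<in> Cspace S S'"
  obtains k where "fst \<xi> (E k)"
proof -
  obtain y where "fst \<xi> y"
    using assms(2) unfolding Cspace_def by blast
  moreover obtain k where "y = E k"
    using surjD[OF assms(1)] by blast
  ultimately show thesis using that by blast
qed

section \<open>Cylinder bumps\<close>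

text \<open>The indicator factor is written as a product over k so that continuity in the
  product topology is immediate.\<close>

definition cyl_bump :: "(nat \<Rightarrow> 'p) \<Rightarrow> nat \<Rightarrow> nat set \<Rightarrow> (nat \<Rightarrow> real) \<Rightarrow> real
    \<Rightarrow> ('p \<Rightarrow> bool) \<times> ('p \<Rightarrow> real) \<Rightarrow> real" where
  "cyl_bump E m B q e \<xi> = (\<Prod>k\<le>m. if fst \<xi> (E k) = (k \<in> B) then 1 else 0) *
      max 0 (1 - (\<Sum>k\<le>m. \<bar>snd \<xi> (E k) - q k\<bar>) / e)"

lemma prod_indicator_eq:
  "(\<Prod>k\<le>(m::nat). if P k then (1::real) else 0) = (if \<forall>k\<le>m. P k then 1 else 0)"
  by (induction m) (auto simp: le_Suc_eq)

lemma cyl_bump_eq: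
  "cyl_bump E m B q e \<xi> = (if \<forall>k\<le>m. fst \<xi> (E k) = (k \<in> B)
     then max 0 (1 - (\<Sum>k\<le>m. \<bar>snd \<xi> (E k) - q k\<bar>) / e) else 0)"
  unfolding cyl_bump_def prod_indicator_eq by auto

lemma cyl_bump_nonneg: "0 \<le> cyl_bump E m B q e \<xi>"
  unfolding cyl_bump_eq by simp

lemma cyl_bump_pos_iff:
  assumes "0 < e"
  shows "0 < cyl_bump E m B q e \<xi> \<longleftrightarrow>
    (\<forall>k\<le>m. fst \<xi> (E k) = (k \<in> B)) \<and> (\<Sum>k\<le>m. \<bar>snd \<xi> (E k) - q k\<bar>) < e"
  using assms unfolding cyl_bump_eq by (simp add: less_max_iff_disj)

lemma cyl_bump_eq_0:
  assumes "0 < e" "k0 \<le> m" "k0 \<in> B" "\<not> fst \<xi> (E k0)"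
  shows "cyl_bump E m B q e \<xi> = 0"
  using assms unfolding cyl_bump_eq by auto

lemma continuous_on_cyl_bump:
  fixes E :: "nat \<Rightarrow> 'p"
  shows "continuous_on UNIV (cyl_bump E m B q e)"
proof -
  have coord: "continuous_on UNIV (\<lambda>\<xi>::('p \<Rightarrow> bool) \<times> ('p \<Rightarrow> real). fst \<xi> y)"
    "continuous_on UNIV (\<lambda>\<xi>::('p \<Rightarrow> bool) \<times> ('p \<Rightarrow> real). snd \<xi> y)" for y
    by (rule continuous_on_compose2[OF continuous_on_product_coordinates continuous_on_fst]
        continuous_on_compose2[OF continuous_on_product_coordinates continuous_on_snd]; simp)+
  have "continuous_on UNIV (\<lambda>b::bool. if b = (k \<in> B) then (1::real) else 0)" for k
    by simp
  then have "continuous_on UNIV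
      (\<lambda>\<xi>::('p \<Rightarrow> bool) \<times> ('p \<Rightarrow> real). if fst \<xi> (E k) = (k \<in> B) then (1::real) else 0)" for k
    by (rule continuous_on_compose2[OF _ coord(1)]) auto
  then show ?thesis
    unfolding cyl_bump_def[abs_def] divide_inverse by (intro continuous_intros coord(2))
qed

lemma cyl_bump_in_Cc_funs:
  fixes S :: "'a::group_add set" and S' :: "'b::group_add set" and E :: "nat \<Rightarrow> 'a \<times> 'b"
  assumes "fin_generating S" "fin_generating S'" "0 < e" "k0 \<le> m" "k0 \<in> B"
  shows "cyl_bump E m B q e \<in> Cc_funs S S'"
proof -
  define K where "K = {A. A (E k0)} \<times> horo_closure (rho S S') (0, 0)"
  have "compact K"
    unfolding K_def by (intro compact_Times compact_pred_true_at compact_horo_closure_rho assms(1,2))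
  moreover have "K \<subseteq> Cspace S S'"
    unfolding K_def Cspace_def by (auto simp del: split_paired_Ex)
  ultimately have "compactin (Ctop S S') K"
    unfolding Ctop_def by (simp add: compactin_subtopology)
  moreover have "cyl_bump E m B q e \<xi> = 0" if "\<xi> \<in> Cspace S S' - K" for \<xi>
    using that assms(3-5) unfolding K_def Cspace_def by (intro cyl_bump_eq_0) (auto simp: mem_Times_iff)
  moreover have "continuous_map (Ctop S S') euclideanreal (cyl_bump E m B q e)"
    unfolding Ctop_def using continuous_on_cyl_bump
    by (intro continuous_map_from_subtopology) (simp add: continuous_map_iff_continuous)
  ultimately show ?thesis unfolding Cc_funs_def by blast
qed

definition cyl_nbhd :: "(nat \<Rightarrow> 'p) \<Rightarrow> ('p \<Rightarrow> bool) \<times> ('p \<Rightarrow> real) \<Rightarrow> nat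
    \<Rightarrow> (('p \<Rightarrow> bool) \<times> ('p \<Rightarrow> real)) set" where
  "cyl_nbhd E \<xi> m = {\<eta>. \<forall>k\<le>m. fst \<eta> (E k) = fst \<xi> (E k) \<and>
      \<bar>snd \<eta> (E k) - snd \<xi> (E k)\<bar> < 1 / (real m + 1)}"

lemma cyl_nbhd_antimono: "m \<le> m' \<Longrightarrow> cyl_nbhd E \<xi> m' \<subseteq> cyl_nbhd E \<xi> m"
proof -
  assume "m \<le> m'"
  then have "1 / (real m' + 1) \<le> 1 / (real m + 1)" by (simp add: frac_le)
  with \<open>m \<le> m'\<close> show ?thesis
    unfolding cyl_nbhd_def by (blast intro: order_trans order.strict_trans2)
qed

lemma cyl_nbhd_coordinate_limits:
  assumes "surj E" "\<And>j. \<eta> j \<in> cyl_nbhd E \<xi> j"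
  shows "(\<lambda>j. fst (\<eta> j) y) \<longlonglongrightarrow> fst \<xi> y" "(\<lambda>j. snd (\<eta> j) y) \<longlonglongrightarrow> snd \<xi> y"
proof -
  obtain k where y: "y = E k" using surjD[OF assms(1)] by blast
  have close: "fst (\<eta> j) y = fst \<xi> y \<and> \<bar>snd (\<eta> j) y - snd \<xi> y\<bar> < 1 / (real j + 1)"
    if "k \<le> j" for j
    using assms(2)[of j] that unfolding cyl_nbhd_def y by blast
  then have "eventually (\<lambda>j. fst (\<eta> j) y = fst \<xi> y) sequentially"
    unfolding eventually_sequentially by blast
  then show "(\<lambda>j. fst (\<eta> j) y) \<longlonglongrightarrow> fst \<xi> y" by (rule tendsto_eventually)
  have "eventually (\<lambda>j. norm (snd (\<eta> j) y - snd \<xi> y) \<le> 1 / (real j + 1)) sequentially"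
    unfolding eventually_sequentially using close by (auto intro!: less_imp_le)
  then have "(\<lambda>j. snd (\<eta> j) y - snd \<xi> y) \<longlonglongrightarrow> 0"
    by (rule Lim_null_comparison)
      (use LIMSEQ_inverse_real_of_nat in \<open>simp add: inverse_eq_divide add.commute\<close>)
  then show "(\<lambda>j. snd (\<eta> j) y) \<longlonglongrightarrow> snd \<xi> y" by (rule LIM_zero_cancel)
qed

lemma tendsto_if_in_cyl_nbhd:
  assumes "surj E" "\<And>j. \<eta> j \<in> cyl_nbhd E \<xi> j"
  shows "\<eta> \<longlonglongrightarrow> \<xi>"
proof -
  have "(\<lambda>j. (fst (\<eta> j), snd (\<eta> j))) \<longlonglongrightarrow> (fst \<xi>, snd \<xi>)"
    using cyl_nbhd_coordinate_limits[OF assms] by (intro tendsto_Pair tendsto_fun_pointwise)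
  then show ?thesis by simp
qed

lemma eventually_notin_cyl_nbhd:
  assumes "surj E" "\<eta> \<noteq> \<xi>"
  shows "eventually (\<lambda>m. \<eta> \<notin> cyl_nbhd E \<xi> m) sequentially"
proof (rule ccontr)
  assume "\<not> ?thesis"
  then have frequently: "\<forall>N. \<exists>m\<ge>N. \<eta> \<in> cyl_nbhd E \<xi> m"
    unfolding eventually_sequentially by auto
  have "\<eta> \<in> cyl_nbhd E \<xi> j" for j
  proof -
    obtain m where "j \<le> m" "\<eta> \<in> cyl_nbhd E \<xi> m"
      using frequently by blast
    then show ?thesis using cyl_nbhd_antimono[OF \<open>j \<le> m\<close>] by blast
  qed
  then have "fst \<eta> y = fst \<xi> y \<and> snd \<eta> y = snd \<xi> y" for y
    using cyl_nbhd_coordinate_limits[OF assms(1), of "\<lambda>_. \<eta>"] by (simp add: LIMSEQ_const_iff)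
  then have "\<eta> = \<xi>" by (simp add: prod_eq_iff fun_eq_iff)
  with assms(2) show False ..
qed

text \<open>Rational parameters make the family countable; requiring the set to contain some
  E k with k \<le> m gives compact support.\<close>

definition bump_family :: "(nat \<Rightarrow> 'p) \<Rightarrow> (('p \<Rightarrow> bool) \<times> ('p \<Rightarrow> real) \<Rightarrow> real) set" where
  "bump_family E = (\<lambda>(m, bs, qs, e :: rat). cyl_bump E m (set bs) (\<lambda>k. of_rat (qs ! k)) (of_rat e))
      ` {(m, bs, qs, e). 0 < e \<and> (\<exists>k\<in>set bs. k \<le> m)}"

lemma countable_bump_family: "countable (bump_family E)"
  unfolding bump_family_def by (intro countable_image countableI_type)

lemma bump_familyE:
  assumes "g \<in> bump_family E"
  obtains m B q e k0 where "g = cyl_bump E m B q e" "0 < e" "k0 \<le> m" "k0 \<in> B"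
  using assms unfolding bump_family_def by auto

lemma bump_family_nonneg: "g \<in> bump_family E \<Longrightarrow> 0 \<le> g \<xi>"
  by (elim bump_familyE) (simp add: cyl_bump_nonneg)

lemma bump_family_in_Cc_funs:
  fixes S :: "'a::group_add set" and S' :: "'b::group_add set" and E :: "nat \<Rightarrow> 'a \<times> 'b"
  assumes "fin_generating S" "fin_generating S'" "g \<in> bump_family E"
  shows "g \<in> Cc_funs S S'"
  using assms(3) by (elim bump_familyE) (simp add: cyl_bump_in_Cc_funs[OF assms(1,2)])

lemma bump_family_anchored:
  assumes "g \<in> bump_family E"
  shows "\<exists>y. \<forall>\<xi>. g \<xi> \<noteq> 0 \<longrightarrow> fst \<xi> y"
proof -
  obtain m B q e k0 where "g = cyl_bump E m B q e" "0 < e" "k0 \<le> m" "k0 \<in> B"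
    using assms by (rule bump_familyE)
  then show ?thesis using cyl_bump_eq_0 by blast
qed

lemma ex_rat_near:
  assumes "0 < (\<delta>::real)"
  shows "\<exists>q::rat. \<bar>of_rat q - x\<bar> < \<delta>"
proof -
  obtain r where "r \<in> \<rat>" "x - \<delta> < r" "r < x + \<delta>"
    using Rats_dense_in_real[of "x - \<delta>" "x + \<delta>"] assms by auto
  then obtain q where "x - \<delta> < of_rat q" "of_rat q < x + \<delta>"
    by (auto elim!: Rats_cases)
  then show ?thesis by (intro exI[of _ q]) auto
qed

lemma cyl_bump_pos_at_center:
  assumes "0 < e" "\<forall>k\<le>m. (k \<in> B) = fst \<xi> (E k)"
    and "\<forall>k\<le>m. \<bar>q k - snd \<xi> (E k)\<bar> < e / (real m + 1)"
  shows "0 < cyl_bump E m B q e \<xi>"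
proof -
  have "(\<Sum>k\<le>m. \<bar>snd \<xi> (E k) - q k\<bar>) < (\<Sum>k\<le>m. e / (real m + 1))"
    using assms(3) by (intro sum_strict_mono) (auto simp: abs_minus_commute)
  then show ?thesis
    using assms(1,2) by (simp add: cyl_bump_pos_iff add.commute)
qed

lemma cyl_bump_pos_imp_in_cyl_nbhd:
  assumes "0 < e" "2 * e \<le> 1 / (real m + 1)" "\<forall>k\<le>m. (k \<in> B) = fst \<xi> (E k)"
    and "\<forall>k\<le>m. \<bar>q k - snd \<xi> (E k)\<bar> < e / (real m + 1)"
    and "0 < cyl_bump E m B q e \<eta>"
  shows "\<eta> \<in> cyl_nbhd E \<xi> m"
proof -
  have pos: "\<forall>k\<le>m. fst \<eta> (E k) = (k \<in> B)" "(\<Sum>k\<le>m. \<bar>snd \<eta> (E k) - q k\<bar>) < e"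
    using assms(5) unfolding cyl_bump_pos_iff[OF assms(1)] by auto
  have "\<bar>snd \<eta> (E k) - snd \<xi> (E k)\<bar> < 1 / (real m + 1)" if "k \<le> m" for k
  proof -
    have "\<bar>snd \<eta> (E k) - q k\<bar> \<le> (\<Sum>k\<le>m. \<bar>snd \<eta> (E k) - q k\<bar>)"
      using that by (intro member_le_sum) auto
    moreover have "e / (real m + 1) \<le> e"
      using assms(1) by (simp add: divide_simps)
    ultimately show ?thesis
      using assms(2) assms(4)[rule_format, OF that] pos(2) by linarith
  qed
  then show ?thesis
    using pos(1) assms(3) unfolding cyl_nbhd_def by auto
qed

lemma bump_family_nbhd:
  assumes "k0 \<le> m" "fst \<xi> (E k0)"
  shows "\<exists>g\<in>bump_family E. 0 < g \<xi> \<and> (\<forall>\<eta>. 0 < g \<eta> \<longrightarrow> \<eta> \<in> cyl_nbhd E \<xi> m)"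
proof -
  define e :: rat where "e = 1 / (2 * (of_nat m + 1))"
  have e: "0 < e" "2 * of_rat e = 1 / (real m + 1)"
    unfolding e_def by (simp_all add: of_rat_divide of_rat_mult of_rat_add field_simps)
  have "\<forall>k. \<exists>q::rat. \<bar>of_rat q - snd \<xi> (E k)\<bar> < of_rat e / (real m + 1)"
    using e by (intro allI ex_rat_near) simp
  then obtain q where q: "\<And>k. \<bar>of_rat (q k) - snd \<xi> (E k)\<bar> < of_rat e / (real m + 1)"
    by metis
  define bs where "bs = filter (\<lambda>k. fst \<xi> (E k)) [0..<Suc m]"
  define qs where "qs = map q [0..<Suc m]"
  have bs: "\<forall>k\<le>m. (k \<in> set bs) = fst \<xi> (E k)"
    unfolding bs_def by (auto simp del: upt_Suc)
  have qs: "\<forall>k\<le>m. \<bar>of_rat (qs ! k) - snd \<xi> (E k)\<bar> < of_rat e / (real m + 1)"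
    using q unfolding qs_def by (auto simp del: upt_Suc simp: nth_map)
  let ?g = "cyl_bump E m (set bs) (\<lambda>k. of_rat (qs ! k)) (of_rat e)"
  have "?g \<in> bump_family E"
    unfolding bump_family_def using e(1) assms bs
    by (intro image_eqI[where x = "(m, bs, qs, e)"]) auto
  moreover have "0 < ?g \<xi>"
    using e bs qs by (intro cyl_bump_pos_at_center) auto
  moreover have "\<eta> \<in> cyl_nbhd E \<xi> m" if "0 < ?g \<eta>" for \<eta>
    using e bs qs that by (intro cyl_bump_pos_imp_in_cyl_nbhd) auto
  ultimately show ?thesis by blast
qed

section \<open>Bumps at points that are not horoballs of type II\<close>

lemma pdiam_in_A_set:
  assumes fg: "fin_generating S" "fin_generating S'" and "mono f"
    and "diamond S S' f r n x y"
    and "word_dist S (fst x) 0 \<le> m \<or> word_dist S' (snd x) 0 \<le> m"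
  shows "pdiam S S' f r n x
    \<in> A_set S S' f r n (real m + real (word_dist S 0 (fst y)) + real (word_dist S' 0 (snd y)) + 1)"
proof -
  obtain t where t: "t \<le> r n" "word_dist S (fst x) (fst y) = r n - t" "word_dist S' (snd x) (snd y) \<le> f t"
    using assms(4) unfolding diamond_def by blast
  have "f t \<le> f (r n)"
    using \<open>mono f\<close> t(1) by (rule monoD)
  moreover have "word_dist S 0 (fst x) \<le> word_dist S 0 (fst y) + word_dist S (fst x) (fst y)"
    "word_dist S' 0 (snd x) \<le> word_dist S' 0 (snd y) + word_dist S' (snd x) (snd y)"
    using word_dist_triangle[OF fg(1), of 0 "fst x" "fst y"] word_dist_commute[OF fg(1), of "fst y"]
      word_dist_triangle[OF fg(2), of 0 "snd x" "snd y"] word_dist_commute[OF fg(2), of "snd y"]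
    by simp_all
  moreover have "word_dist S (fst x) 0 = word_dist S 0 (fst x)" "word_dist S' (snd x) 0 = word_dist S' 0 (snd x)"
    using word_dist_commute fg by blast+
  ultimately show ?thesis
    using t assms(5) unfolding A_set_def by (intro CollectI exI[of _ x]) auto
qed

text \<open>Otherwise a diagonal sequence of pointed diamonds with both coordinates of the
  centre unbounded converges to \<xi>.\<close>

lemma not_horoball_II_isolated:
  assumes "surj E" "\<xi> \<in> Cspace S S'" "\<not> horoball_II S S' f r \<xi>"
  shows "\<exists>m\<ge>m0. \<forall>n\<ge>m. \<forall>x. pdiam S S' f r n x \<in> cyl_nbhd E \<xi> m \<longrightarrow>
    word_dist S (fst x) 0 \<le> m \<or> word_dist S' (snd x) 0 \<le> m"
proof (rule ccontr)
  assume contra: "\<not> ?thesis"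
  have "\<exists>n x. j + m0 \<le> n \<and> pdiam S S' f r n x \<in> cyl_nbhd E \<xi> (j + m0) \<and>
    j + m0 < word_dist S (fst x) 0 \<and> j + m0 < word_dist S' (snd x) 0" for j
  proof -
    have "\<not> (\<forall>n\<ge>j + m0. \<forall>x. pdiam S S' f r n x \<in> cyl_nbhd E \<xi> (j + m0) \<longrightarrow>
        word_dist S (fst x) 0 \<le> j + m0 \<or> word_dist S' (snd x) 0 \<le> j + m0)"
      using contra le_add2[of m0 j] by blast
    then show ?thesis unfolding not_all not_imp not_le de_Morgan_disj by blast
  qed
  then obtain nk xk where far: "\<And>j. j + m0 \<le> nk j"
    "\<And>j. pdiam S S' f r (nk j) (xk j) \<in> cyl_nbhd E \<xi> (j + m0)"
    "\<And>j. j + m0 < word_dist S (fst (xk j)) 0" "\<And>j. j + m0 < word_dist S' (snd (xk j)) 0"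
    by metis
  have "j \<le> nk j" "j \<le> word_dist S (fst (xk j)) 0" "j \<le> word_dist S' (snd (xk j)) 0" for j
    using far(1,3,4)[of j] by linarith+
  then have "filterlim nk at_top sequentially"
    "filterlim (\<lambda>j. word_dist S (fst (xk j)) 0) at_top sequentially"
    "filterlim (\<lambda>j. word_dist S' (snd (xk j)) 0) at_top sequentially"
    by (auto intro!: filterlim_at_top_mono[OF filterlim_ident])
  moreover have "pdiam S S' f r (nk j) (xk j) \<in> cyl_nbhd E \<xi> j" for j
    using far(2)[of j] cyl_nbhd_antimono[of j "j + m0" E \<xi>] by auto
  then have "(\<lambda>j. pdiam S S' f r (nk j) (xk j)) \<longlonglongrightarrow> \<xi>"
    by (rule tendsto_if_in_cyl_nbhd[OF assms(1)])
  ultimately have "horoball_II S S' f r \<xi>"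
    unfolding horoball_II_def using assms(2) by (intro disjI1 conjI exI[of _ nk] exI[of _ xk])
  with assms(3) show False ..
qed

text \<open>The hypothesis on A_set forces the integrals of these bumps to vanish almost surely
  in the limit.\<close>

definition confined_bumps :: "(nat \<Rightarrow> 'a \<times> 'b) \<Rightarrow> 'a::group_add set \<Rightarrow> 'b::group_add set
    \<Rightarrow> (nat \<Rightarrow> nat) \<Rightarrow> (nat \<Rightarrow> nat) \<Rightarrow> (('a, 'b) pset \<Rightarrow> real) set" where
  "confined_bumps E S S' f r = {g \<in> bump_family E. \<exists>N T. \<forall>n\<ge>N. \<forall>x.
      0 < g (pdiam S S' f r n x) \<longrightarrow> pdiam S S' f r n x \<in> A_set S S' f r n T}"

lemma not_horoball_II_confined_bump:
  fixes S :: "'a::group_add set" and S' :: "'b::group_add set" and E :: "nat \<Rightarrow> 'a \<times> 'b"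
  assumes fg: "fin_generating S" "fin_generating S'" and "surj E" "mono f"
    and "\<xi> \<in> Cspace S S'" "\<not> horoball_II S S' f r \<xi>"
  shows "\<exists>g\<in>confined_bumps E S S' f r. 0 < g \<xi>"
proof -
  obtain k0 where k0: "fst \<xi> (E k0)"
    using Cspace_anchor[OF assms(3,5)] by blast
  obtain m where m: "k0 \<le> m" "\<And>n x. m \<le> n \<Longrightarrow> pdiam S S' f r n x \<in> cyl_nbhd E \<xi> m \<Longrightarrow>
      word_dist S (fst x) 0 \<le> m \<or> word_dist S' (snd x) 0 \<le> m"
    using not_horoball_II_isolated[OF assms(3,5,6), of k0] by blast
  obtain g where g: "g \<in> bump_family E" "0 < g \<xi>" "\<And>\<eta>. 0 < g \<eta> \<Longrightarrow> \<eta> \<in> cyl_nbhd E \<xi> m"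
    using bump_family_nbhd[where E = E and \<xi> = \<xi>, OF m(1) k0] by blast
  have "pdiam S S' f r n x \<in> A_set S S' f r n
      (real m + real (word_dist S 0 (fst (E k0))) + real (word_dist S' 0 (snd (E k0))) + 1)"
    if "m \<le> n" "0 < g (pdiam S S' f r n x)" for n x
  proof (rule pdiam_in_A_set[OF fg assms(4)])
    have nbhd: "pdiam S S' f r n x \<in> cyl_nbhd E \<xi> m"
      using g(3) that(2) .
    then show "diamond S S' f r n x (E k0)"
      using k0 m(1) unfolding cyl_nbhd_def pdiam_def by auto
    show "word_dist S (fst x) 0 \<le> m \<or> word_dist S' (snd x) 0 \<le> m"
      using m(2)[OF that(1) nbhd] .
  qed
  with g(1,2) show ?thesis unfolding confined_bumps_def by blast
qed

section \<open>Measurability in the vague topology\<close>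

lemma space_borel_of: "space (borel_of X) = topspace X"
  unfolding borel_of_def by (rule space_measure_of) (auto dest: openin_subset)

lemma sets_borel_of_openin: "openin X U \<Longrightarrow> U \<in> sets (borel_of X)"
  unfolding borel_of_def by (subst sets_measure_of) (auto dest: openin_subset)

lemma continuous_map_borel_measurable:
  assumes "continuous_map X euclideanreal F"
  shows "F \<in> borel_measurable (borel_of X)"
proof (rule borel_measurableI)
  fix U :: "real set"
  assume "open U"
  then have "openin X {x \<in> topspace X. F x \<in> U}"
    using assms unfolding continuous_map by auto
  moreover have "F -` U \<inter> space (borel_of X) = {x \<in> topspace X. F x \<in> U}"
    by (auto simp: space_borel_of)
  ultimately show "F -` U \<inter> space (borel_of X) \<in> sets (borel_of X)"
    by (simp add: sets_borel_of_openin)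
qed

lemma topspace_vague_top: "topspace (vague_top S S') = disc_sets S S'"
proof -
  have "(\<lambda>_. 0) \<in> Cc_funs S S'"
    unfolding Cc_funs_def by (auto intro!: exI[of _ "{}"])
  then have "UNIV \<in> {{\<mu>. cm_integral g \<mu> \<in> U} | g U. g \<in> Cc_funs S S' \<and> open U}"
    by (auto intro!: exI[of _ "\<lambda>_. 0"] exI[of _ UNIV])
  then show ?thesis unfolding vague_top_def by auto
qed

lemma space_eq_disc_sets:
  "sets M = sets (borel_of (vague_top S S')) \<Longrightarrow> space M = disc_sets S S'"
  by (drule sets_eq_imp_space_eq) (simp add: space_borel_of topspace_vague_top)

lemma continuous_map_cm_integral:
  assumes "g \<in> Cc_funs S S'"
  shows "continuous_map (vague_top S S') euclideanreal (cm_integral g)"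
  unfolding continuous_map
proof safe
  fix U :: "real set"
  assume "openin euclideanreal U"
  then have "openin (topology_generated_by {{\<mu>. cm_integral g \<mu> \<in> U} | g U. g \<in> Cc_funs S S' \<and> open U})
      {\<mu>. cm_integral g \<mu> \<in> U}"
    using assms by (intro topology_generated_by_Basis) auto
  moreover have "{\<mu> \<in> topspace (vague_top S S'). cm_integral g \<mu> \<in> U}
      = {\<mu>. cm_integral g \<mu> \<in> U} \<inter> disc_sets S S'"
    by (auto simp: topspace_vague_top)
  ultimately show "openin (vague_top S S') {\<mu> \<in> topspace (vague_top S S'). cm_integral g \<mu> \<in> U}"
    unfolding vague_top_def by (auto simp: openin_subtopology)
qed auto

lemma sets_cm_integral_pos:
  assumes "g \<in> Cc_funs S S'"
  shows "{\<mu> \<in> disc_sets S S'. 0 < cm_integral g \<mu>} \<in> sets (borel_of (vague_top S S'))"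
proof -
  have "cm_integral g \<in> borel_measurable (borel_of (vague_top S S'))"
    using assms by (intro continuous_map_borel_measurable continuous_map_cm_integral)
  from measurable_sets[OF this, of "{0<..}"] show ?thesis
    by (simp add: space_borel_of topspace_vague_top vimage_def Int_def conj_commute)
qed

lemma cm_integral_nonneg: "(\<And>\<xi>. 0 \<le> g \<xi>) \<Longrightarrow> 0 \<le> cm_integral g \<mu>"
  unfolding cm_integral_def by (intro sum_nonneg) auto

lemma cm_integral_pos_imp_ex:
  assumes "0 < cm_integral g \<mu>"
  obtains \<xi> where "\<mu> \<xi> \<noteq> 0" "g \<xi> \<noteq> 0"
proof -
  have "{\<xi>. \<mu> \<xi> \<noteq> 0 \<and> g \<xi> \<noteq> 0} \<noteq> {}"
    using assms unfolding cm_integral_def by (metis less_irrefl sum.empty)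
  then show thesis using that by blast
qed

lemma finite_atoms_anchored:
  assumes "\<mu> \<in> disc_sets S S'" "\<And>\<xi>. g \<xi> \<noteq> 0 \<Longrightarrow> fst \<xi> y"
  shows "finite {\<xi>. \<mu> \<xi> \<noteq> 0 \<and> g \<xi> \<noteq> 0}"
proof (rule finite_subset)
  show "finite {\<xi>. \<mu> \<xi> \<noteq> 0 \<and> fst \<xi> y}"
    using assms(1) unfolding disc_sets_def by blast
qed (use assms(2) in auto)

lemma cm_integral_ge_atom:
  assumes "\<mu> \<in> disc_sets S S'" "\<And>\<xi>. 0 \<le> g \<xi>" "\<And>\<xi>. g \<xi> \<noteq> 0 \<Longrightarrow> fst \<xi> y"
  shows "real (\<mu> \<xi>) * g \<xi> \<le> cm_integral g \<mu>"
proof (cases "\<mu> \<xi> \<noteq> 0 \<and> g \<xi> \<noteq> 0")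
  case True
  then show ?thesis unfolding cm_integral_def
    using finite_atoms_anchored[OF assms(1,3)] assms(2) by (intro member_le_sum) auto
next
  case False
  then show ?thesis using cm_integral_nonneg[of g \<mu>] assms(2) by auto
qed

lemma cm_integral_bump_pos:
  assumes "\<mu> \<in> disc_sets S S'" "g \<in> bump_family E" "\<mu> \<xi> \<noteq> 0" "0 < g \<xi>"
  shows "0 < cm_integral g \<mu>"
proof -
  obtain y where y: "\<And>\<eta>. g \<eta> \<noteq> 0 \<Longrightarrow> fst \<eta> y"
    using bump_family_anchored[OF assms(2)] by blast
  have "real (\<mu> \<xi>) * g \<xi> \<le> cm_integral g \<mu>"
    by (rule cm_integral_ge_atom[OF assms(1) bump_family_nonneg[OF assms(2)] y])
  moreover have "0 < real (\<mu> \<xi>) * g \<xi>"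
    using assms(3,4) by simp
  ultimately show ?thesis by linarith
qed

lemma eventually_cm_integral_eq_0:
  assumes "surj E" "fst \<xi> (E k0)" "\<mu> \<in> disc_sets S S'" "\<mu> \<xi> = 0"
    and g: "\<And>j. g j \<in> bump_family E" "\<And>j \<eta>. 0 < g j \<eta> \<Longrightarrow> \<eta> \<in> cyl_nbhd E \<xi> (j + k0)"
  shows "eventually (\<lambda>j. cm_integral (g j) \<mu> = 0) sequentially"
proof -
  have support: "\<eta> \<in> cyl_nbhd E \<xi> j \<and> fst \<eta> (E k0)" if "g j \<eta> \<noteq> 0" for j \<eta>
  proof -
    have "\<eta> \<in> cyl_nbhd E \<xi> (j + k0)"
      using g bump_family_nonneg[OF g(1)] that by (simp add: order_neq_le_trans)
    moreover have "\<eta> \<in> cyl_nbhd E \<xi> (j + k0) \<Longrightarrow> fst \<eta> (E k0)"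
      using assms(2) unfolding cyl_nbhd_def by auto
    ultimately show ?thesis using cyl_nbhd_antimono[of j "j + k0" E \<xi>] by auto
  qed
  define F where "F = {\<eta>. \<mu> \<eta> \<noteq> 0 \<and> fst \<eta> (E k0)}"
  have "finite F"
    using assms(3) unfolding F_def disc_sets_def by blast
  moreover have "\<forall>\<eta>\<in>F. eventually (\<lambda>j. \<eta> \<notin> cyl_nbhd E \<xi> j) sequentially"
    using assms(4) by (auto simp: F_def intro!: eventually_notin_cyl_nbhd[OF assms(1)])
  ultimately have "eventually (\<lambda>j. \<forall>\<eta>\<in>F. \<eta> \<notin> cyl_nbhd E \<xi> j) sequentially"
    by (rule eventually_ball_finite)
  then show ?thesis
  proof eventually_elim
    case (elim j)
    then have "{\<eta>. \<mu> \<eta> \<noteq> 0 \<and> g j \<eta> \<noteq> 0} = {}"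
      using support unfolding F_def by blast
    then show ?case
      unfolding cm_integral_def by (simp only: sum.empty)
  qed
qed

lemma atom_set_eq_INT:
  assumes "surj E" "fst \<xi> (E k0)"
    and g: "\<And>j. g j \<in> bump_family E" "\<And>j. 0 < g j \<xi>"
      "\<And>j \<eta>. 0 < g j \<eta> \<Longrightarrow> \<eta> \<in> cyl_nbhd E \<xi> (j + k0)"
  shows "{\<mu> \<in> disc_sets S S'. \<mu> \<xi> \<noteq> 0} = (\<Inter>j. {\<mu> \<in> disc_sets S S'. 0 < cm_integral (g j) \<mu>})"
proof (intro equalityI subsetI)
  fix \<mu>
  assume "\<mu> \<in> {\<mu> \<in> disc_sets S S'. \<mu> \<xi> \<noteq> 0}"
  then have disc: "\<mu> \<in> disc_sets S S'" and atom: "\<mu> \<xi> \<noteq> 0" by auto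
  have "0 < cm_integral (g j) \<mu>" for j
    by (rule cm_integral_bump_pos[OF disc g(1) atom g(2)])
  with disc show "\<mu> \<in> (\<Inter>j. {\<mu> \<in> disc_sets S S'. 0 < cm_integral (g j) \<mu>})" by simp
next
  fix \<mu>
  assume "\<mu> \<in> (\<Inter>j. {\<mu> \<in> disc_sets S S'. 0 < cm_integral (g j) \<mu>})"
  then have disc: "\<mu> \<in> disc_sets S S'" and pos: "\<And>j. 0 < cm_integral (g j) \<mu>" by auto
  show "\<mu> \<in> {\<mu> \<in> disc_sets S S'. \<mu> \<xi> \<noteq> 0}"
  proof (rule ccontr)
    assume "\<mu> \<notin> {\<mu> \<in> disc_sets S S'. \<mu> \<xi> \<noteq> 0}"
    with disc have "\<mu> \<xi> = 0" by simp
    then have "eventually (\<lambda>j. cm_integral (g j) \<mu> = 0) sequentially"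
      by (rule eventually_cm_integral_eq_0[OF assms(1,2) disc _ g(1,3)])
    then obtain j where "cm_integral (g j) \<mu> = 0"
      unfolding eventually_sequentially by blast
    with pos[of j] show False by simp
  qed
qed

lemma sets_atom:
  fixes S :: "'a::group_add set" and S' :: "'b::group_add set"
  assumes fg: "fin_generating S" "fin_generating S'" and "\<xi> \<in> Cspace S S'"
  shows "{\<mu> \<in> disc_sets S S'. \<mu> \<xi> \<noteq> 0} \<in> sets (borel_of (vague_top S S'))"
proof -
  define E where "E = from_nat_into (UNIV :: ('a \<times> 'b) set)"
  have E: "surj E"
    unfolding E_def by (rule surj_from_nat_into_UNIV[OF fg])
  obtain k0 where k0: "fst \<xi> (E k0)"
    using Cspace_anchor[OF E assms(3)] by blast
  have "\<forall>j. \<exists>g\<in>bump_family E. 0 < g \<xi> \<and> (\<forall>\<eta>. 0 < g \<eta> \<longrightarrow> \<eta> \<in> cyl_nbhd E \<xi> (j + k0))"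
    using bump_family_nbhd[where E = E and \<xi> = \<xi>, OF le_add2 k0] by blast
  then obtain g where g: "\<And>j. g j \<in> bump_family E" "\<And>j. 0 < g j \<xi>"
    "\<And>j \<eta>. 0 < g j \<eta> \<Longrightarrow> \<eta> \<in> cyl_nbhd E \<xi> (j + k0)"
    unfolding Bex_def choice_iff by blast
  have "{\<mu> \<in> disc_sets S S'. \<mu> \<xi> \<noteq> 0} = (\<Inter>j. {\<mu> \<in> disc_sets S S'. 0 < cm_integral (g j) \<mu>})"
    by (rule atom_set_eq_INT[OF E k0 g])
  also have "\<dots> \<in> sets (borel_of (vague_top S S'))"
    using sets_cm_integral_pos[OF bump_family_in_Cc_funs[OF fg g(1)]]
    by (intro sets.countable_INT) auto
  finally show ?thesis .
qed

lemma sets_atoms_countable: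
  fixes S :: "'a::group_add set" and S' :: "'b::group_add set"
  assumes "fin_generating S" "fin_generating S'" "X \<subseteq> Cspace S S'" "countable X"
  shows "{\<mu> \<in> disc_sets S S'. \<exists>\<xi>\<in>X. \<mu> \<xi> \<noteq> 0} \<in> sets (borel_of (vague_top S S'))"
proof -
  have "{\<mu> \<in> disc_sets S S'. \<exists>\<xi>\<in>X. \<mu> \<xi> \<noteq> 0} = (\<Union>\<xi>\<in>X. {\<mu> \<in> disc_sets S S'. \<mu> \<xi> \<noteq> 0})"
    by auto
  also have "\<dots> \<in> sets (borel_of (vague_top S S'))"
    using assms sets_atom[OF assms(1,2)] by (intro sets.countable_UN'') auto
  finally show ?thesis .
qed

lemma sets_hits_A_set:
  fixes S :: "'a::group_add set" and S' :: "'b::group_add set"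
  assumes "fin_generating S" "fin_generating S'"
  shows "{\<mu> \<in> disc_sets S S'. \<exists>\<xi>\<in>A_set S S' f r n T. \<mu> \<xi> \<noteq> 0} \<in> sets (borel_of (vague_top S S'))"
proof (rule sets_atoms_countable[OF assms])
  have "A_set S S' f r n T \<subseteq> range (pdiam S S' f r n)"
    unfolding A_set_def by auto
  then show "A_set S S' f r n T \<subseteq> Cspace S S'"
    using pdiam_in_Cspace by blast
  show "countable (A_set S S' f r n T)"
    using \<open>A_set S S' f r n T \<subseteq> range _\<close>
    by (rule countable_subset[OF _ countable_image[OF countable_UNIV_prod_fin_generating[OF assms]]])
qed

section \<open>Weak limits of the diamond processes\<close>

lemma integral_le_measure_if_AE_le_indicator:
  assumes "finite_measure M" "F \<in> borel_measurable M" "\<And>x. F x \<in> {0..1}"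
    and "A \<in> sets M" "AE x in M. F x \<le> indicator A x"
  shows "integral\<^sup>L M F \<le> measure M A"
proof -
  interpret finite_measure M by (rule assms(1))
  have "integrable M F"
    using assms(2,3) by (intro integrable_const_bound[where B = 1]) (auto simp: abs_le_iff)
  then have "integral\<^sup>L M F \<le> integral\<^sup>L M (indicator A)"
    using assms(4,5) by (intro integral_mono_AE) (auto simp: less_top[symmetric])
  then show ?thesis using assms(4) by simp
qed

lemma AE_eq_0_if_weak_conv:
  assumes "\<And>k. prob_space (P k)" "\<And>k. sets (P k) = sets (borel_of X)"
    and "prob_space Q" "sets Q = sets (borel_of X)" "weak_conv_top X P Q"
    and "continuous_map X euclideanreal F" "\<And>x. F x \<in> {0..1}"
    and "(\<lambda>k. integral\<^sup>L (P k) F) \<longlonglongrightarrow> 0"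
  shows "AE x in Q. F x = 0"
proof -
  interpret Q: prob_space Q by (rule assms(3))
  have "bounded (F ` topspace X)"
    using assms(7) by (intro bounded_subset[OF bounded_closed_interval[of 0 1]]) auto
  then have "(\<lambda>k. integral\<^sup>L (P k) F) \<longlonglongrightarrow> integral\<^sup>L Q F"
    using assms(5,6) unfolding weak_conv_top_def by blast
  then have "integral\<^sup>L Q F = 0"
    using assms(8) LIMSEQ_unique by blast
  moreover have "F \<in> borel_measurable Q"
    using continuous_map_borel_measurable[OF assms(6)] measurable_cong_sets[OF assms(4) refl] by blast
  then have "integrable Q F"
    using assms(7) by (intro Q.integrable_const_bound[where B = 1]) (auto simp: abs_le_iff)
  ultimately show ?thesis
    using assms(7) by (subst (asm) integral_nonneg_eq_0_iff_AE) auto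
qed

lemma min_cm_integral_le_indicator:
  assumes "\<And>\<xi>. 0 \<le> g \<xi>"
    and "\<forall>x. 0 < g (pdiam S S' f r n x) \<longrightarrow> pdiam S S' f r n x \<in> A_set S S' f r n T"
    and "\<forall>\<xi>. \<mu> \<xi> \<noteq> 0 \<longrightarrow> \<xi> \<in> range (pdiam S S' f r n)" "\<mu> \<in> X"
  shows "min 1 (cm_integral g \<mu>) \<le> indicator {\<mu> \<in> X. \<exists>\<xi>\<in>A_set S S' f r n T. \<mu> \<xi> \<noteq> 0} \<mu>"
proof (cases "0 < cm_integral g \<mu>")
  case True
  then obtain \<xi> where \<xi>: "\<mu> \<xi> \<noteq> 0" "g \<xi> \<noteq> 0"
    by (rule cm_integral_pos_imp_ex)
  obtain x where x: "\<xi> = pdiam S S' f r n x"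
    using assms(3) \<xi>(1) by blast
  have "0 < g \<xi>"
    using \<xi>(2) assms(1)[of \<xi>] by simp
  then have "\<xi> \<in> A_set S S' f r n T"
    using assms(2) unfolding x by blast
  with assms(4) \<xi>(1) have "\<mu> \<in> {\<mu> \<in> X. \<exists>\<xi>\<in>A_set S S' f r n T. \<mu> \<xi> \<noteq> 0}"
    by blast
  then show ?thesis by simp
next
  case False
  then have "min 1 (cm_integral g \<mu>) \<le> 0" by simp
  then show ?thesis by (meson indicator_pos_le order_trans)
qed

lemma integral_min_cm_integral_le:
  fixes S :: "'a::group_add set" and S' :: "'b::group_add set"
  assumes fg: "fin_generating S" "fin_generating S'"
    and M: "prob_space M" "sets M = sets (borel_of (vague_top S S'))"
    and diamonds: "AE \<mu> in M. \<forall>\<xi>. \<mu> \<xi> \<noteq> 0 \<longrightarrow> \<xi> \<in> range (pdiam S S' f r n)"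
    and g: "g \<in> Cc_funs S S'" "\<And>\<xi>. 0 \<le> g \<xi>"
    and certificate: "\<forall>x. 0 < g (pdiam S S' f r n x) \<longrightarrow> pdiam S S' f r n x \<in> A_set S S' f r n T"
  shows "integral\<^sup>L M (\<lambda>\<mu>. min 1 (cm_integral g \<mu>))
    \<le> measure M {\<mu> \<in> space M. \<exists>\<xi>\<in>A_set S S' f r n T. \<mu> \<xi> \<noteq> 0}"
    (is "_ \<le> measure M ?A")
proof (rule integral_le_measure_if_AE_le_indicator)
  show "finite_measure M"
    using M(1) by (rule prob_space.finite_measure)
  have "cm_integral g \<in> borel_measurable M"
    using continuous_map_borel_measurable[OF continuous_map_cm_integral[OF g(1)]]
      measurable_cong_sets[OF M(2) refl] by blast
  then show "(\<lambda>\<mu>. min 1 (cm_integral g \<mu>)) \<in> borel_measurable M"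
    by (intro borel_measurable_min) auto
  show "min 1 (cm_integral g \<mu>) \<in> {0..1}" for \<mu>
    using cm_integral_nonneg[OF g(2)] by simp
  show "?A \<in> sets M"
    using sets_hits_A_set[OF fg] by (simp add: M(2) space_eq_disc_sets[OF M(2)])
  show "AE \<mu> in M. min 1 (cm_integral g \<mu>) \<le> indicator ?A \<mu>"
    using diamonds AE_space by eventually_elim (rule min_cm_integral_le_indicator[OF g(2) certificate])
qed

lemma AE_cm_integral_eq_0:
  fixes S :: "'a::group_add set" and S' :: "'b::group_add set"
    and P :: "nat \<Rightarrow> (('a, 'b) pset \<Rightarrow> nat) measure"
  assumes fg: "fin_generating S" "fin_generating S'"
    and P: "\<And>n. prob_space (P n)" "\<And>n. sets (P n) = sets (borel_of (vague_top S S'))"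
    and diamonds: "\<And>n. AE \<mu> in P n. \<forall>\<xi>. \<mu> \<xi> \<noteq> 0 \<longrightarrow> \<xi> \<in> range (pdiam S S' f r n)"
    and rare: "(\<lambda>n. measure (P n) {\<mu> \<in> space (P n). \<exists>\<xi>\<in>A_set S S' f r n T. \<mu> \<xi> \<noteq> 0})
                    \<longlonglongrightarrow> 0"
    and Q: "prob_space Q" "sets Q = sets (borel_of (vague_top S S'))"
    and s: "strict_mono s" and weak: "weak_conv_top (vague_top S S') (\<lambda>k. P (s k)) Q"
    and g: "g \<in> Cc_funs S S'" "\<And>\<xi>. 0 \<le> g \<xi>"
    and certificate: "\<forall>n\<ge>N. \<forall>x. 0 < g (pdiam S S' f r n x) \<longrightarrow> pdiam S S' f r n x \<in> A_set S S' f r n T"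
  shows "AE \<mu> in Q. cm_integral g \<mu> = 0"
proof -
  define F where "F \<mu> = min 1 (cm_integral g \<mu>)" for \<mu>
  let ?A = "\<lambda>n. {\<mu> \<in> space (P n). \<exists>\<xi>\<in>A_set S S' f r n T. \<mu> \<xi> \<noteq> 0}"
  have F: "F \<mu> \<in> {0..1}" for \<mu>
    using cm_integral_nonneg[OF g(2)] unfolding F_def by simp
  have "eventually (\<lambda>k. N \<le> s k) sequentially"
    using filterlim_subseq[OF s] unfolding filterlim_at_top by blast
  then have upper: "eventually (\<lambda>k. integral\<^sup>L (P (s k)) F \<le> measure (P (s k)) (?A (s k))) sequentially"
  proof eventually_elim
    case (elim k)
    show ?case unfolding F_def
      by (rule integral_min_cm_integral_le[OF fg P diamonds g]) (use certificate elim in blast)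
  qed
  have lower: "eventually (\<lambda>k. 0 \<le> integral\<^sup>L (P (s k)) F) sequentially"
    using F by (intro always_eventually allI Bochner_Integration.integral_nonneg) auto
  have "(\<lambda>k. measure (P (s k)) (?A (s k))) \<longlonglongrightarrow> 0"
    using LIMSEQ_subseq_LIMSEQ[OF rare s] by (simp add: o_def)
  then have lim: "(\<lambda>k. integral\<^sup>L (P (s k)) F) \<longlonglongrightarrow> 0"
    by (rule real_tendsto_sandwich[OF lower upper tendsto_const])
  have cont: "continuous_map (vague_top S S') euclideanreal F"
    unfolding F_def using continuous_map_compose[OF continuous_map_cm_integral[OF g(1)],
        of euclideanreal "min 1"]
    by (simp add: o_def continuous_on_min)
  have "AE \<mu> in Q. F \<mu> = 0"
    by (rule AE_eq_0_if_weak_conv[OF P Q weak cont F lim])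
  then show ?thesis
    by eventually_elim (simp add: F_def min_def split: if_splits)
qed

lemma AE_confined_bumps_vanish:
  fixes S :: "'a::group_add set" and S' :: "'b::group_add set"
    and P :: "nat \<Rightarrow> (('a, 'b) pset \<Rightarrow> nat) measure"
  assumes fg: "fin_generating S" "fin_generating S'"
    and P: "\<And>n. prob_space (P n)" "\<And>n. sets (P n) = sets (borel_of (vague_top S S'))"
      "\<And>n. AE \<mu> in P n. \<forall>\<xi>. \<mu> \<xi> \<noteq> 0 \<longrightarrow> \<xi> \<in> range (pdiam S S' f r n)"
      "\<And>T. (\<lambda>n. measure (P n) {\<mu> \<in> space (P n). \<exists>\<xi>\<in>A_set S S' f r n T. \<mu> \<xi> \<noteq> 0})
              \<longlonglongrightarrow> 0"
    and Q: "prob_space Q" "sets Q = sets (borel_of (vague_top S S'))"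
      "strict_mono s" "weak_conv_top (vague_top S S') (\<lambda>k. P (s k)) Q"
  shows "AE \<mu> in Q. \<forall>g\<in>confined_bumps E S S' f r. cm_integral g \<mu> = 0"
proof (rule AE_ball_countable')
  fix g
  assume "g \<in> confined_bumps E S S' f r"
  then obtain N T where "g \<in> bump_family E" and "\<forall>n\<ge>N. \<forall>x.
      0 < g (pdiam S S' f r n x) \<longrightarrow> pdiam S S' f r n x \<in> A_set S S' f r n T"
    unfolding confined_bumps_def by blast
  then show "AE \<mu> in Q. cm_integral g \<mu> = 0"
    by (intro AE_cm_integral_eq_0[OF fg P Q] bump_family_in_Cc_funs[OF fg] bump_family_nonneg)
next
  show "countable (confined_bumps E S S' f r)"
    unfolding confined_bumps_def by (rule countable_subset[OF _ countable_bump_family]) auto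
qed

lemma horoball_II_if_confined_bumps_vanish:
  fixes S :: "'a::group_add set" and S' :: "'b::group_add set" and E :: "nat \<Rightarrow> 'a \<times> 'b"
  assumes fg: "fin_generating S" "fin_generating S'" and "surj E" "mono f"
    and \<mu>: "\<mu> \<in> disc_sets S S'" "\<forall>g\<in>confined_bumps E S S' f r. cm_integral g \<mu> = 0"
    and atom: "\<mu> \<xi> \<noteq> 0"
  shows "horoball_II S S' f r \<xi>"
proof (rule ccontr)
  assume "\<not> horoball_II S S' f r \<xi>"
  moreover have "\<xi> \<in> Cspace S S'"
    using \<mu>(1) atom unfolding disc_sets_def by blast
  ultimately obtain g where g: "g \<in> confined_bumps E S S' f r" "0 < g \<xi>"
    using not_horoball_II_confined_bump[OF fg assms(3,4)] by blast
  then have "0 < cm_integral g \<mu>"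
    using \<mu>(1) atom unfolding confined_bumps_def by (intro cm_integral_bump_pos) auto
  with \<mu>(2) g(1) show False by simp
qed

theorem lemma3p6:
  fixes S :: "'a::group_add set" and S' :: "'b::group_add set"
    and f r :: "nat \<Rightarrow> nat"
    and P :: "nat \<Rightarrow> (('a, 'b) pset \<Rightarrow> nat) measure"
    and Q :: "(('a, 'b) pset \<Rightarrow> nat) measure"
    and s :: "nat \<Rightarrow> nat"
  assumes "fin_generating S" and "fin_generating S'"
    and "growth_rate S > 1" and "growth_rate S' > 1"
    and "mono f" and "f 0 = 0" and "strict_mono r"
    and "0 < (INF n. real (ball_vol S' (f (r n))) / real (ball_vol S (r n)))"
    and "bdd_above (range (\<lambda>n. real (ball_vol S' (f (r n))) / real (ball_vol S (r n))))"
    and "\<forall>m. \<exists>N. \<forall>n\<ge>N. \<bar>real (f (n + m)) - real (f n) - cexp S S' * real m\<bar> \<le> 1"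
    and "\<And>n. prob_space (P n)"
    and "\<And>n. sets (P n) = sets (borel_of (vague_top S S'))"
    and "\<And>n. AE \<mu> in P n. \<forall>\<xi>. \<mu> \<xi> \<noteq> 0 \<longrightarrow> \<xi> \<in> range (pdiam S S' f r n)"
    and "\<And>T::real. (\<lambda>n. measure (P n) {\<mu> \<in> space (P n). \<exists>\<xi>\<in>A_set S S' f r n T. \<mu> \<xi> \<noteq> 0})
                    \<longlonglongrightarrow> 0"
    and "prob_space Q" and "sets Q = sets (borel_of (vague_top S S'))"
    and "strict_mono s" and "weak_conv_top (vague_top S S') (\<lambda>k. P (s k)) Q"
  shows "AE \<mu> in Q. \<forall>\<xi>. \<mu> \<xi> \<noteq> 0 \<longrightarrow> horoball_II S S' f r \<xi>"
proof -
  note fg = assms(1,2)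
  define E where "E = from_nat_into (UNIV :: ('a \<times> 'b) set)"
  have E: "surj E"
    unfolding E_def by (rule surj_from_nat_into_UNIV[OF fg])
  have "AE \<mu> in Q. \<forall>g\<in>confined_bumps E S S' f r. cm_integral g \<mu> = 0"
    by (rule AE_confined_bumps_vanish[OF fg assms(11-18)])
  moreover have "AE \<mu> in Q. \<mu> \<in> disc_sets S S'"
    using AE_space[of Q] space_eq_disc_sets[OF assms(16)] by simp
  ultimately show ?thesis
    by eventually_elim (blast intro: horoball_II_if_confined_bumps_vanish[OF fg E assms(5)])
qed

end
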